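(* Let $\mathcal{L}\in\mathrm{Mat}_d(\mathbb{Z})$ be invertible over $\mathbb{Q}$. Let $G=\mathbb{Z}^d/\mathcal{L}^2\mathbb{Z}^d$ (a finite abelian group), let $H$ be its subgroup $\mathcal{L}\mathbb{Z}^d/\mathcal{L}^2\mathbb{Z}^d$, and note that $\mathcal{L}$ induces a homomorphism $G\to G$, also denoted $\mathcal{L}$. Let $X\subseteq G$ with $0\in X$. Then at least one of the following holds: (1) $X+H$ does not generate $G$; (2) $X+\mathcal{L} X\supsetneq X$; (3) $H\subseteq X$.
   Context: Note $X+\mathcal{L}X\supseteq X$ always holds since $0\in X$. *)

theory Defs
  imports "HOL-Analysis.Analysis" "HOL-Algebra.Algebra"
begin

definition Zd :: "(int ^ 'd::finite) monoid" where
  "Zd = \<lparr>carrier = UNIV, mult = (+), one = 0\<rparr>"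

definition latt :: "int ^ 'd ^ 'd \<Rightarrow> (int ^ 'd::finite) set" where
  "latt M = range (\<lambda>v. M *v v)"

definition Gq :: "int ^ 'd ^ 'd \<Rightarrow> (int ^ 'd::finite) set monoid" where
  "Gq L = Zd Mod latt (L ** L)"

definition Hq :: "int ^ 'd ^ 'd \<Rightarrow> (int ^ 'd::finite) set set" where
  "Hq L = (\<lambda>v. latt (L ** L) #>\<^bsub>Zd\<^esub> v) ` latt L"

text \<open>The endomorphism of G induced by L: the coset v + L^2 Z^d goes to L v + L^2 Z^d.\<close>
definition Lind :: "int ^ 'd ^ 'd \<Rightarrow> (int ^ 'd::finite) set \<Rightarrow> (int ^ 'd) set" where
  "Lind L C = latt (L ** L) <#>\<^bsub>Zd\<^esub> ((\<lambda>v. L *v v) ` C)"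

end

theory Submission
  imports Defs
begin

text \<open>Call \<open>a \<in> G\<close> admissible if \<open>X + La \<subseteq> X\<close>. Admissible elements form a submonoid of \<open>G\<close>,
  which is a torsion group (\<open>|det L|\<^sup>2\<close> annihilates it, by Cramer's rule), hence a subgroup.
  If \<open>X + LX = X\<close>, it contains \<open>X\<close>, and it contains \<open>H\<close> because \<open>L\<close> kills \<open>H\<close>; so if
  \<open>X + H\<close> generates \<open>G\<close>, every element is admissible, and \<open>0 \<in> X\<close> gives \<open>H = LG \<subseteq> X\<close>.\<close>

lemma det_map_matrix_of_int: "det (map_matrix of_int A) = (of_int (det A) :: 'a::comm_ring_1)"
  by (simp add: det_def of_int_sum of_int_prod)

lemma map_matrix_of_int_mult_vec:
  "map_matrix of_int A *v (\<chi> i. of_int (x $ i)) = ((\<chi> i. of_int ((A *v x) $ i)) :: 'a::comm_ring_1 ^ 'n::finite)"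
  by (simp add: matrix_vector_mult_def vec_eq_iff of_int_sum)

lemma matrix_vector_mult_uminus: "(A :: 'a::ring_1 ^ 'n::finite ^ 'm) *v (- x) = - (A *v x)"
  using matrix_vector_mult_diff_distrib[of A 0 x] by simp

text \<open>Cramer's rule over \<open>\<rat>\<close>, noting that the numerators \<open>w\<close> are integer determinants.\<close>
lemma det_smult_in_range_int_matrix:
  fixes M :: "int ^ 'n::finite ^ 'n"
  assumes "det (map_matrix rat_of_int M) \<noteq> 0"
  shows "det M *s v \<in> range ((*v) M)"
proof -
  define MQ where "MQ = map_matrix rat_of_int M"
  define vQ where "vQ = (\<chi> i. rat_of_int (v $ i))"
  obtain B where B: "MQ ** B = mat 1"
    using assms unfolding MQ_def invertible_det_nz[symmetric] invertible_def by blast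
  define x where "x = B *v vQ"
  have x: "MQ *v x = vQ" unfolding x_def by (simp add: matrix_vector_mul_assoc B)
  define w where "w = (\<chi> k. det (\<chi> i j. if j = k then v $ i else M $ i $ j))"
  have w: "x $ k * det MQ = rat_of_int (w $ k)" for k
  proof -
    have "(\<chi> i j. if j = k then (MQ *v x) $ i else MQ $ i $ j)
        = map_matrix rat_of_int (\<chi> i j. if j = k then v $ i else M $ i $ j)"
      using x by (simp add: MQ_def vQ_def vec_eq_iff)
    then show ?thesis using cramer_lemma[where A = MQ and x = x and k = k] by (simp add: w_def det_map_matrix_of_int)
  qed
  have "MQ *v (\<chi> i. rat_of_int (w $ i)) = MQ *v (det MQ *s x)"
    by (rule arg_cong[where f = "(*v) MQ"]) (simp add: vec_eq_iff w[symmetric] mult.commute)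
  also have "\<dots> = det MQ *s vQ" by (simp add: vector_scalar_commute x)
  finally have "(\<chi> i. rat_of_int ((M *v w) $ i)) = (\<chi> i. rat_of_int ((det M *s v) $ i))"
    by (simp add: map_matrix_of_int_mult_vec[symmetric] MQ_def vQ_def det_map_matrix_of_int vec_eq_iff)
  then have "M *v w = det M *s v" by (simp add: vec_eq_iff flip: of_int_mult)
  then show ?thesis by (metis rangeI)
qed

lemma (in group) torsion_submonoid_subgroup:
  assumes "submonoid T G" and "\<And>a. a \<in> T \<Longrightarrow> \<exists>n::nat > 0. a [^] n = \<one>"
  shows "subgroup T G"
proof (rule submonoid_subgroupI[OF assms(1)])
  fix a assume a: "a \<in> T"
  then obtain n :: nat where "n > 0" "a [^] n = \<one>" using assms(2) by blast
  have a_carrier: "a \<in> carrier G" using a submonoid.subset[OF assms(1)] by blast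
  have pow: "a [^] k \<in> T" for k :: nat
    by (induction k) (simp_all add: a submonoid.one_closed[OF assms(1)] submonoid.m_closed[OF assms(1)])
  have "a [^] (n - 1) \<otimes> a = \<one>"
    using \<open>n > 0\<close> \<open>a [^] n = \<one>\<close> by (metis Suc_diff_1 nat_pow_Suc)
  then have "inv a = a [^] (n - 1)" by (rule inv_equality) (simp_all add: a_carrier)
  with pow show "inv a \<in> T" by simp
qed

lemma (in group) hom_image_subset_of_set_mult_closed:
  assumes torsion: "\<And>g. g \<in> carrier G \<Longrightarrow> \<exists>n::nat > 0. g [^] n = \<one>"
    and hom: "\<phi> \<in> hom G G"
    and H: "H \<subseteq> carrier G" "\<And>h. h \<in> H \<Longrightarrow> \<phi> h = \<one>"
    and A: "A \<subseteq> carrier G" "\<one> \<in> A" "A <#> \<phi> ` A \<subseteq> A"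
    and gen: "generate G (A <#> H) = carrier G"
  shows "\<phi> ` carrier G \<subseteq> A"
proof -
  interpret group_hom G G \<phi>
    by (simp add: group_hom_def group_hom_axioms_def is_group hom)
  have A_step: "x \<otimes> \<phi> a \<in> A" if "x \<in> A" "a \<in> A" for x a
    using A(3) that unfolding set_mult_def by blast
  define T where "T = {a \<in> carrier G. \<forall>x \<in> A. x \<otimes> \<phi> a \<in> A}"
  have "submonoid T G"
  proof
    show "T \<subseteq> carrier G" by (auto simp: T_def)
    show "\<one> \<in> T" using A(1) by (auto simp: T_def)
    fix a b assume "a \<in> T" "b \<in> T"
    then show "a \<otimes> b \<in> T" using A(1) by (auto simp: T_def m_assoc[symmetric] subset_iff)
  qed
  then have "subgroup T G"
    by (rule torsion_submonoid_subgroup) (auto simp: T_def torsion)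
  moreover have "A <#> H \<subseteq> T"
    using A(1) H A_step by (auto simp: T_def set_mult_def subset_iff)
  ultimately have "carrier G \<subseteq> T" using generate_subgroup_incl gen by metis
  then show ?thesis using A(1) by (auto simp: T_def A(2) dest!: bspec[of _ _ \<one>])
qed

lemma Zd_simps [simp]: "carrier Zd = UNIV" "mult Zd = (+)" "one Zd = 0"
  by (simp_all add: Zd_def)

lemma comm_group_Zd: "comm_group (Zd :: (int ^ 'd::finite) monoid)"
  by (rule comm_groupI) (auto simp: add.assoc add.commute intro: exI[where x = "- _"])

lemma group_Zd: "group (Zd :: (int ^ 'd::finite) monoid)"
  using comm_group_Zd comm_group.axioms(2) by blast

lemma inv_Zd [simp]: "inv\<^bsub>Zd\<^esub> (v :: int ^ 'd::finite) = - v"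
  by (rule group.inv_equality[OF group_Zd]) simp_all

lemma nat_pow_Zd [simp]: "v [^]\<^bsub>Zd\<^esub> n = of_nat n *s (v :: int ^ 'd::finite)"
  by (induction n) (simp_all add: vector_sadd_rdistrib add.commute)

lemma subgroup_latt: "subgroup (latt M) (Zd :: (int ^ 'd::finite) monoid)"
proof
  fix a b assume "a \<in> latt M" "b \<in> latt M"
  then show "a \<otimes>\<^bsub>Zd\<^esub> b \<in> latt M" "inv\<^bsub>Zd\<^esub> a \<in> latt M"
    by (auto simp: latt_def simp flip: matrix_vector_right_distrib matrix_vector_mult_uminus)
qed (auto simp: latt_def intro!: range_eqI[where x = 0])

lemma normal_latt: "latt M \<lhd> (Zd :: (int ^ 'd::finite) monoid)"
  using comm_group.normal_iff_subgroup[OF comm_group_Zd] subgroup_latt by blast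

lemma smult_abs_det_in_latt:
  assumes "det (map_matrix rat_of_int M) \<noteq> 0"
  shows "of_int \<bar>det M\<bar> *s v \<in> latt M"
proof -
  obtain w where w: "M *v w = det M *s v"
    using det_smult_in_range_int_matrix[OF assms] by (metis rangeE)
  have "M *v (if det M \<ge> 0 then w else - w) = of_int \<bar>det M\<bar> *s v"
    by (simp add: w matrix_vector_mult_uminus vec_eq_iff)
  then show ?thesis by (metis latt_def rangeI)
qed

lemma group_Zd_Mod_latt: "group (Zd Mod latt M :: (int ^ 'd::finite) set monoid)"
  by (rule normal.factorgroup_is_group[OF normal_latt])

lemma carrier_Zd_Mod_latt: "carrier (Zd Mod latt M) = range (\<lambda>v. latt M #>\<^bsub>Zd\<^esub> v)"
  by (auto simp: FactGroup_def RCOSETS_def)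

lemma Zd_Mod_latt_simps [simp]:
  "one (Zd Mod latt M) = latt M" "mult (Zd Mod latt M) = set_mult Zd"
  by (simp_all add: FactGroup_def)

lemma rcos_sum_latt:
  "(latt M #>\<^bsub>Zd\<^esub> a) <#>\<^bsub>Zd\<^esub> (latt M #>\<^bsub>Zd\<^esub> b) = latt M #>\<^bsub>Zd\<^esub> (a + (b :: int ^ 'd::finite))"
  using normal.rcos_sum[OF normal_latt] by simp

lemma Zd_Mod_latt_torsion:
  assumes "det (map_matrix rat_of_int M) \<noteq> 0" and "C \<in> carrier (Zd Mod latt M)"
  shows "\<exists>n::nat > 0. C [^]\<^bsub>Zd Mod latt M\<^esub> n = \<one>\<^bsub>Zd Mod latt M\<^esub>"
proof -
  obtain v where C: "C = latt M #>\<^bsub>Zd\<^esub> v" using assms(2) by (auto simp: carrier_Zd_Mod_latt)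
  define n where "n = nat \<bar>det M\<bar>"
  have "n > 0" using assms(1) by (auto simp: n_def det_map_matrix_of_int)
  have "C [^]\<^bsub>Zd Mod latt M\<^esub> n = latt M #>\<^bsub>Zd\<^esub> (v [^]\<^bsub>Zd\<^esub> n)"
    unfolding C
    by (rule hom_nat_pow[OF normal.r_coset_hom_Mod[OF normal_latt] _ group_Zd group_Zd_Mod_latt,
          symmetric]) simp
  also have "\<dots> = \<one>\<^bsub>Zd Mod latt M\<^esub>"
    using subgroup.rcos_const[OF subgroup_latt group_Zd smult_abs_det_in_latt[OF assms(1)]]
    by (simp add: n_def)
  finally show ?thesis using \<open>n > 0\<close> by (intro exI[of _ n]) simp
qed

lemma matrix_vector_mult_in_latt_square:
  "x \<in> latt (L ** L) \<Longrightarrow> L *v x \<in> latt (L ** L)"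
proof -
  assume "x \<in> latt (L ** L)"
  then obtain u where "x = (L ** L) *v u" by (auto simp: latt_def)
  then have "L *v x = (L ** L) *v (L *v u)"
    by (simp add: matrix_vector_mul_assoc matrix_mul_assoc)
  then show ?thesis by (simp add: latt_def)
qed

lemma Lind_rcoset:
  "Lind L (latt (L ** L) #>\<^bsub>Zd\<^esub> v) = latt (L ** L) #>\<^bsub>Zd\<^esub> (L *v v)"
proof (intro equalityI subsetI)
  fix y assume "y \<in> Lind L (latt (L ** L) #>\<^bsub>Zd\<^esub> v)"
  then obtain k k' where "k \<in> latt (L ** L)" "k' \<in> latt (L ** L)" "y = k + (L *v k' + L *v v)"
    by (auto simp: Lind_def set_mult_def r_coset_def matrix_vector_right_distrib)
  moreover have "k + L *v k' \<in> latt (L ** L)"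
    using subgroup.m_closed[OF subgroup_latt] matrix_vector_mult_in_latt_square \<open>k \<in> _\<close> \<open>k' \<in> _\<close>
    by (metis Zd_simps(2))
  ultimately show "y \<in> latt (L ** L) #>\<^bsub>Zd\<^esub> (L *v v)"
    by (force simp: r_coset_def add.assoc)
next
  fix y assume "y \<in> latt (L ** L) #>\<^bsub>Zd\<^esub> (L *v v)"
  then show "y \<in> Lind L (latt (L ** L) #>\<^bsub>Zd\<^esub> v)"
    using subgroup.one_closed[OF subgroup_latt, of "L ** L"]
    by (force simp: Lind_def set_mult_def r_coset_def)
qed

lemma Lind_hom: "Lind L \<in> hom (Gq L) (Gq L)"
  by (auto simp: hom_def Gq_def carrier_Zd_Mod_latt Lind_rcoset rcos_sum_latt
      matrix_vector_right_distrib)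

lemma Hq_eq_Lind_image: "Hq L = Lind L ` carrier (Gq L)"
  unfolding Hq_def Gq_def carrier_Zd_Mod_latt image_image Lind_rcoset
  by (simp add: latt_def image_image)

lemma Lind_Hq_eq_one: "h \<in> Hq L \<Longrightarrow> Lind L h = \<one>\<^bsub>Gq L\<^esub>"
proof -
  assume "h \<in> Hq L"
  then obtain w where "h = latt (L ** L) #>\<^bsub>Zd\<^esub> (L *v w)" by (auto simp: Hq_def latt_def)
  then have "Lind L h = latt (L ** L) #>\<^bsub>Zd\<^esub> ((L ** L) *v w)"
    by (simp add: Lind_rcoset matrix_vector_mul_assoc)
  also have "\<dots> = latt (L ** L)"
    by (rule subgroup.rcos_const[OF subgroup_latt group_Zd]) (simp add: latt_def)
  finally show ?thesis by (simp add: Gq_def)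
qed

theorem lemma3p2:
  fixes L :: "int ^ 'd::finite ^ 'd"
    and S :: "(int ^ 'd) set set"
  assumes "invertible (map_matrix rat_of_int L)"
    and "S \<subseteq> carrier (Gq L)"
    and "one (Gq L) \<in> S"
  shows "generate (Gq L) (set_mult (Gq L) S (Hq L)) \<noteq> carrier (Gq L)
       \<or> S \<subset> set_mult (Gq L) S (Lind L ` S)
       \<or> Hq L \<subseteq> S"
proof -
  interpret group "Gq L" unfolding Gq_def by (rule group_Zd_Mod_latt)
  interpret group_hom "Gq L" "Gq L" "Lind L"
    by (simp add: group_hom_def group_hom_axioms_def is_group Lind_hom)
  have det: "det (map_matrix rat_of_int (L ** L)) \<noteq> 0"
    using assms(1) by (simp add: invertible_det_nz det_map_matrix_of_int det_mul)
  have Hq_carrier: "Hq L \<subseteq> carrier (Gq L)"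
    unfolding Hq_eq_Lind_image using hom_closed by blast
  have "Hq L \<subseteq> S"
    if gen: "generate (Gq L) (S <#>\<^bsub>Gq L\<^esub> Hq L) = carrier (Gq L)"
      and not_strict: "\<not> S \<subset> S <#>\<^bsub>Gq L\<^esub> Lind L ` S"
  proof -
    have "S \<subseteq> S <#>\<^bsub>Gq L\<^esub> Lind L ` S"
      using assms(2,3) by (force simp: set_mult_def)
    with not_strict have closed: "S <#>\<^bsub>Gq L\<^esub> Lind L ` S \<subseteq> S" by blast
    have "Lind L ` carrier (Gq L) \<subseteq> S"
      by (rule hom_image_subset_of_set_mult_closed[OF _ Lind_hom Hq_carrier Lind_Hq_eq_one assms(2,3) closed gen])
        (use Zd_Mod_latt_torsion[OF det] in \<open>simp add: Gq_def\<close>)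
    then show ?thesis by (simp add: Hq_eq_Lind_image)
  qed
  then show ?thesis by blast
qed

end
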